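(* Let $A$ be a commutative monoid which is a domain (if $A$ has no zero: $A$ is cancellative; if $A$ is a monoid with zero: $A\setminus\{0\}$ is a cancellative submonoid). Then every projective $A$-module is free.
   Context: If $A$ has no zero, an $A$-module is a set with a unital associative $A$-action; if $A$ has a zero, it is a pointed set with an action in which $0$ acts by sending everything to the base point, which is fixed. Free modules are coproducts (disjoint unions, resp. wedge sums) of copies of $A$. A module is projective if every surjection onto it has a section, equivalently if it is a retract of a free module. *)

theory Defs
  imports "HOL-Algebra.Group"
begin

definition cancellative :: "('a, 'b) monoid_scheme \<Rightarrow> bool" where
  "cancellative A \<longleftrightarrow>
     (\<forall>a\<in>carrier A. \<forall>b\<in>carrier A. \<forall>c\<in>carrier A. a \<otimes>\<^bsub>A\<^esub> b = a \<otimes>\<^bsub>A\<^esub> c \<longrightarrow> b = c)"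

definition set_module :: "('a, 'b) monoid_scheme \<Rightarrow> 'm set \<Rightarrow> ('a \<Rightarrow> 'm \<Rightarrow> 'm) \<Rightarrow> bool" where
  "set_module A M act \<longleftrightarrow>
     (\<forall>a\<in>carrier A. \<forall>x\<in>M. act a x \<in> M) \<and>
     (\<forall>x\<in>M. act \<one>\<^bsub>A\<^esub> x = x) \<and>
     (\<forall>a\<in>carrier A. \<forall>b\<in>carrier A. \<forall>x\<in>M. act (a \<otimes>\<^bsub>A\<^esub> b) x = act a (act b x))"

definition set_module_hom ::
  "('a, 'b) monoid_scheme \<Rightarrow> 'm set \<Rightarrow> ('a \<Rightarrow> 'm \<Rightarrow> 'm) \<Rightarrow> 'n set \<Rightarrow> ('a \<Rightarrow> 'n \<Rightarrow> 'n)
     \<Rightarrow> ('m \<Rightarrow> 'n) \<Rightarrow> bool" where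
  "set_module_hom A M act N act' f \<longleftrightarrow>
     (\<forall>x\<in>M. f x \<in> N) \<and> (\<forall>a\<in>carrier A. \<forall>x\<in>M. f (act a x) = act' a (f x))"

text \<open>Free module on index set I: the disjoint union of copies of A, i.e. I \<times> A.\<close>
definition free_set_module_carrier :: "('a, 'b) monoid_scheme \<Rightarrow> 'i set \<Rightarrow> ('i \<times> 'a) set" where
  "free_set_module_carrier A I = I \<times> carrier A"

definition free_set_module_act :: "('a, 'b) monoid_scheme \<Rightarrow> 'a \<Rightarrow> ('i \<times> 'a) \<Rightarrow> ('i \<times> 'a)" where
  "free_set_module_act A a p = (fst p, a \<otimes>\<^bsub>A\<^esub> snd p)"

text \<open>M is free if it is isomorphic to a coproduct of copies of A. An index set of such an
  isomorphism injects into M (i \<mapsto> \<phi>(i,1)), so index sets of the carrier type of M suffice.\<close>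
definition set_module_free :: "('a, 'b) monoid_scheme \<Rightarrow> 'm set \<Rightarrow> ('a \<Rightarrow> 'm \<Rightarrow> 'm) \<Rightarrow> bool" where
  "set_module_free A M act \<longleftrightarrow>
     (\<exists>(I :: 'm set) \<phi>.
        set_module_hom A (free_set_module_carrier A I) (free_set_module_act A) M act \<phi> \<and>
        bij_betw \<phi> (free_set_module_carrier A I) M)"

text \<open>Projective: every surjection onto M (from any module) has a section. Since HOL cannot
  quantify over types inside a formula, we use the (stated) equivalent: M is a retract of a
  free module; the canonical free cover (indexed by M itself) shows index sets of the carrier
  type of M suffice.\<close>
definition set_module_projective :: "('a, 'b) monoid_scheme \<Rightarrow> 'm set \<Rightarrow> ('a \<Rightarrow> 'm \<Rightarrow> 'm) \<Rightarrow> bool" where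
  "set_module_projective A M act \<longleftrightarrow>
     (\<exists>(I :: 'm set) r s.
        set_module_hom A (free_set_module_carrier A I) (free_set_module_act A) M act r \<and>
        set_module_hom A M act (free_set_module_carrier A I) (free_set_module_act A) s \<and>
        (\<forall>x\<in>M. r (s x) = x))"

definition is_zero_of :: "('a, 'b) monoid_scheme \<Rightarrow> 'a \<Rightarrow> bool" where
  "is_zero_of A z \<longleftrightarrow> z \<in> carrier A \<and>
     (\<forall>a\<in>carrier A. z \<otimes>\<^bsub>A\<^esub> a = z \<and> a \<otimes>\<^bsub>A\<^esub> z = z)"

definition domain_with_zero :: "('a, 'b) monoid_scheme \<Rightarrow> 'a \<Rightarrow> bool" where
  "domain_with_zero A z \<longleftrightarrow>
     \<one>\<^bsub>A\<^esub> \<noteq> z \<and>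
     (\<forall>a\<in>carrier A - {z}. \<forall>b\<in>carrier A - {z}. a \<otimes>\<^bsub>A\<^esub> b \<noteq> z) \<and>
     (\<forall>a\<in>carrier A - {z}. \<forall>b\<in>carrier A - {z}. \<forall>c\<in>carrier A - {z}.
        a \<otimes>\<^bsub>A\<^esub> b = a \<otimes>\<^bsub>A\<^esub> c \<longrightarrow> b = c)"

definition pointed_module ::
  "('a, 'b) monoid_scheme \<Rightarrow> 'a \<Rightarrow> 'm set \<Rightarrow> 'm \<Rightarrow> ('a \<Rightarrow> 'm \<Rightarrow> 'm) \<Rightarrow> bool" where
  "pointed_module A z M bp act \<longleftrightarrow>
     bp \<in> M \<and> set_module A M act \<and>
     (\<forall>x\<in>M. act z x = bp) \<and> (\<forall>a\<in>carrier A. act a bp = bp)"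

definition pointed_module_hom ::
  "('a, 'b) monoid_scheme \<Rightarrow> 'm set \<Rightarrow> 'm \<Rightarrow> ('a \<Rightarrow> 'm \<Rightarrow> 'm) \<Rightarrow> 'n set \<Rightarrow> 'n \<Rightarrow> ('a \<Rightarrow> 'n \<Rightarrow> 'n)
     \<Rightarrow> ('m \<Rightarrow> 'n) \<Rightarrow> bool" where
  "pointed_module_hom A M bp act N bp' act' f \<longleftrightarrow>
     f bp = bp' \<and> set_module_hom A M act N act' f"

text \<open>Free pointed module on I: the wedge sum of copies of A; the base point is None and
  the non-base points are the pairs (i, a) with a \<noteq> 0.\<close>
definition free_pointed_carrier :: "('a, 'b) monoid_scheme \<Rightarrow> 'a \<Rightarrow> 'i set \<Rightarrow> ('i \<times> 'a) option set" where
  "free_pointed_carrier A z I = insert None (Some ` (I \<times> (carrier A - {z})))"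

definition free_pointed_act :: "('a, 'b) monoid_scheme \<Rightarrow> 'a \<Rightarrow> 'a \<Rightarrow> ('i \<times> 'a) option \<Rightarrow> ('i \<times> 'a) option" where
  "free_pointed_act A z a p =
     (case p of None \<Rightarrow> None
      | Some (i, b) \<Rightarrow> (if a \<otimes>\<^bsub>A\<^esub> b = z then None else Some (i, a \<otimes>\<^bsub>A\<^esub> b)))"

definition pointed_module_free ::
  "('a, 'b) monoid_scheme \<Rightarrow> 'a \<Rightarrow> 'm set \<Rightarrow> 'm \<Rightarrow> ('a \<Rightarrow> 'm \<Rightarrow> 'm) \<Rightarrow> bool" where
  "pointed_module_free A z M bp act \<longleftrightarrow>
     (\<exists>(I :: 'm set) \<phi>.
        pointed_module_hom A (free_pointed_carrier A z I) None (free_pointed_act A z) M bp act \<phi> \<and>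
        bij_betw \<phi> (free_pointed_carrier A z I) M)"

definition pointed_module_projective ::
  "('a, 'b) monoid_scheme \<Rightarrow> 'a \<Rightarrow> 'm set \<Rightarrow> 'm \<Rightarrow> ('a \<Rightarrow> 'm \<Rightarrow> 'm) \<Rightarrow> bool" where
  "pointed_module_projective A z M bp act \<longleftrightarrow>
     (\<exists>(I :: 'm set) r s.
        pointed_module_hom A (free_pointed_carrier A z I) None (free_pointed_act A z) M bp act r \<and>
        pointed_module_hom A M bp act (free_pointed_carrier A z I) None (free_pointed_act A z) s \<and>
        (\<forall>x\<in>M. r (s x) = x))"

end

theory Submission
  imports Defs
begin

text \<open>Let \<open>M\<close> be a retract of a free module \<open>F(I)\<close>, with \<open>r : F(I) \<rightarrow> M\<close> and a section
  \<open>s\<close>. The idempotent endomorphism \<open>e = s \<circ> r\<close> of \<open>F(I)\<close> is determined by the images of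
  the generators: \<open>e(i, a) = a \<cdot> e(i, 1)\<close>. For \<open>x \<in> M\<close> with \<open>s x = (i, a)\<close> we have
  \<open>e(i, a) = (i, a)\<close>, and cancelling \<open>a\<close> (here the domain hypothesis enters) gives
  \<open>e(i, 1) = (i, 1)\<close>. Hence, with \<open>J\<close> the set of indices whose generator is fixed by \<open>e\<close>,
  \<open>s\<close> maps \<open>M\<close> into \<open>F(J)\<close>, \<open>e\<close> is the identity on \<open>F(J)\<close>, and \<open>r\<close> restricts to an
  isomorphism \<open>F(J) \<cong> M\<close>.\<close>

lemma set_module_hom_comp:
  assumes "set_module_hom A M act N act' f" and "set_module_hom A N act' P act'' g"
  shows "set_module_hom A M act P act'' (g \<circ> f)"
  using assms by (simp add: set_module_hom_def)

lemma free_set_module_carrier_mono: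
  "J \<subseteq> I \<Longrightarrow> free_set_module_carrier A J \<subseteq> free_set_module_carrier A I"
  by (auto simp: free_set_module_carrier_def)

lemma set_module_hom_free_subset:
  assumes "set_module_hom A (free_set_module_carrier A I) (free_set_module_act A) N act f"
    and "J \<subseteq> I"
  shows "set_module_hom A (free_set_module_carrier A J) (free_set_module_act A) N act f"
  using assms free_set_module_carrier_mono[OF assms(2), of A]
  unfolding set_module_hom_def by blast

lemma free_set_module_act_generator:
  "monoid A \<Longrightarrow> a \<in> carrier A \<Longrightarrow> free_set_module_act A a (i, \<one>\<^bsub>A\<^esub>) = (i, a)"
  by (simp add: free_set_module_act_def)

lemma free_set_module_hom_generator:
  assumes "monoid A"
    and f: "set_module_hom A (free_set_module_carrier A I) (free_set_module_act A) N act f"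
    and "i \<in> I" and "a \<in> carrier A"
  shows "f (i, a) = act a (f (i, \<one>\<^bsub>A\<^esub>))"
proof -
  have "(i, \<one>\<^bsub>A\<^esub>) \<in> free_set_module_carrier A I"
    using assms by (simp add: free_set_module_carrier_def)
  then have "f (free_set_module_act A a (i, \<one>\<^bsub>A\<^esub>)) = act a (f (i, \<one>\<^bsub>A\<^esub>))"
    using f \<open>a \<in> carrier A\<close> unfolding set_module_hom_def by blast
  then show ?thesis
    using assms by (simp add: free_set_module_act_generator)
qed

lemma free_set_module_act_eq_generator:
  assumes "monoid A" and "cancellative A" and "a \<in> carrier A"
    and q: "q \<in> free_set_module_carrier A I" and "free_set_module_act A a q = (i, a)"
  shows "q = (i, \<one>\<^bsub>A\<^esub>)"
proof -
  obtain j c where qjc: "q = (j, c)" and "c \<in> carrier A"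
    using q by (auto simp: free_set_module_carrier_def)
  moreover have "j = i" and "a \<otimes>\<^bsub>A\<^esub> c = a \<otimes>\<^bsub>A\<^esub> \<one>\<^bsub>A\<^esub>"
    using assms qjc by (simp_all add: free_set_module_act_def)
  ultimately show ?thesis
    using assms by (auto simp: cancellative_def)
qed

theorem projective_set_module_free:
  fixes M :: "'m set"
  assumes A: "monoid A" and canc: "cancellative A" and proj: "set_module_projective A M act"
  shows "set_module_free A M act"
proof -
  obtain I :: "'m set" and r s where
    r: "set_module_hom A (free_set_module_carrier A I) (free_set_module_act A) M act r" and
    s: "set_module_hom A M act (free_set_module_carrier A I) (free_set_module_act A) s" and
    rs: "\<forall>x\<in>M. r (s x) = x"
    using proj unfolding set_module_projective_def by blast
  let ?F = "free_set_module_carrier A"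
  have e: "set_module_hom A (?F I) (free_set_module_act A) (?F I) (free_set_module_act A) (s \<circ> r)"
    using r s by (rule set_module_hom_comp)
  have e_generator: "s (r (i, a)) = free_set_module_act A a (s (r (i, \<one>\<^bsub>A\<^esub>)))"
    if "i \<in> I" "a \<in> carrier A" for i a
    using free_set_module_hom_generator[OF A e that] by simp
  define J where "J = {i \<in> I. s (r (i, \<one>\<^bsub>A\<^esub>)) = (i, \<one>\<^bsub>A\<^esub>)}"
  have "J \<subseteq> I" by (auto simp: J_def)
  have e_fixes_FJ: "\<forall>p \<in> ?F J. s (r p) = p"
    using A by (auto simp: free_set_module_carrier_def J_def e_generator free_set_module_act_generator)
  have s_into_FJ: "s ` M \<subseteq> ?F J"
  proof
    fix y assume "y \<in> s ` M"
    then obtain x where x: "x \<in> M" and "y = s x" by blast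
    then obtain i a where sx: "s x = (i, a)" "i \<in> I" "a \<in> carrier A" and y: "y = (i, a)"
      using s by (force simp: set_module_hom_def free_set_module_carrier_def)
    have "(i, \<one>\<^bsub>A\<^esub>) \<in> ?F I"
      using A sx by (simp add: free_set_module_carrier_def)
    then have "s (r (i, \<one>\<^bsub>A\<^esub>)) \<in> ?F I"
      using e by (simp add: set_module_hom_def)
    moreover have "free_set_module_act A a (s (r (i, \<one>\<^bsub>A\<^esub>))) = (i, a)"
      using rs x sx e_generator by metis
    ultimately have "s (r (i, \<one>\<^bsub>A\<^esub>)) = (i, \<one>\<^bsub>A\<^esub>)"
      by (rule free_set_module_act_eq_generator[OF A canc sx(3)])
    then show "y \<in> ?F J"
      using sx y by (simp add: J_def free_set_module_carrier_def)
  qed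
  have "r ` ?F J \<subseteq> M"
    using r free_set_module_carrier_mono[OF \<open>J \<subseteq> I\<close>] by (auto simp: set_module_hom_def)
  then have "bij_betw r (?F J) M"
    using e_fixes_FJ rs s_into_FJ by (intro bij_betw_byWitness[where f' = s])
  then show ?thesis
    unfolding set_module_free_def using set_module_hom_free_subset[OF r \<open>J \<subseteq> I\<close>] by blast
qed

lemma pointed_module_hom_comp:
  assumes "pointed_module_hom A M bp act N bp' act' f"
    and "pointed_module_hom A N bp' act' P bp'' act'' g"
  shows "pointed_module_hom A M bp act P bp'' act'' (g \<circ> f)"
  using assms unfolding pointed_module_hom_def by (auto intro: set_module_hom_comp)

lemma free_pointed_carrier_mono:
  "J \<subseteq> I \<Longrightarrow> free_pointed_carrier A z J \<subseteq> free_pointed_carrier A z I"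
  by (auto simp: free_pointed_carrier_def)

lemma pointed_module_hom_free_subset:
  assumes "pointed_module_hom A (free_pointed_carrier A z I) None (free_pointed_act A z) N bp act f"
    and "J \<subseteq> I"
  shows "pointed_module_hom A (free_pointed_carrier A z J) None (free_pointed_act A z) N bp act f"
  using assms free_pointed_carrier_mono[OF assms(2), of A z]
  unfolding pointed_module_hom_def set_module_hom_def by blast

lemma free_pointed_act_generator:
  "monoid A \<Longrightarrow> a \<in> carrier A \<Longrightarrow> a \<noteq> z \<Longrightarrow>
    free_pointed_act A z a (Some (i, \<one>\<^bsub>A\<^esub>)) = Some (i, a)"
  by (simp add: free_pointed_act_def)

lemma free_pointed_hom_generator:
  assumes "monoid A" and "domain_with_zero A z"
    and f: "pointed_module_hom A (free_pointed_carrier A z I) None (free_pointed_act A z) N bp act f"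
    and "i \<in> I" and "a \<in> carrier A" and "a \<noteq> z"
  shows "f (Some (i, a)) = act a (f (Some (i, \<one>\<^bsub>A\<^esub>)))"
proof -
  have "Some (i, \<one>\<^bsub>A\<^esub>) \<in> free_pointed_carrier A z I"
    using assms by (simp add: free_pointed_carrier_def domain_with_zero_def)
  then have "f (free_pointed_act A z a (Some (i, \<one>\<^bsub>A\<^esub>))) = act a (f (Some (i, \<one>\<^bsub>A\<^esub>)))"
    using f \<open>a \<in> carrier A\<close> unfolding pointed_module_hom_def set_module_hom_def by blast
  then show ?thesis
    using assms by (simp add: free_pointed_act_generator)
qed

lemma free_pointed_act_eq_generator:
  assumes "monoid A" and d: "domain_with_zero A z" and a: "a \<in> carrier A" "a \<noteq> z"
    and q: "q \<in> free_pointed_carrier A z I" and act: "free_pointed_act A z a q = Some (i, a)"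
  shows "q = Some (i, \<one>\<^bsub>A\<^esub>)"
proof -
  have "q \<noteq> None"
    using act by (auto simp: free_pointed_act_def split: option.splits)
  then obtain j c where qjc: "q = Some (j, c)" and c: "c \<in> carrier A" "c \<noteq> z"
    using q by (auto simp: free_pointed_carrier_def)
  have "a \<otimes>\<^bsub>A\<^esub> c \<noteq> z"
    using d a c unfolding domain_with_zero_def by blast
  then have "j = i" and ac: "a \<otimes>\<^bsub>A\<^esub> c = a \<otimes>\<^bsub>A\<^esub> \<one>\<^bsub>A\<^esub>"
    using act qjc a \<open>monoid A\<close> by (simp_all add: free_pointed_act_def)
  have "\<one>\<^bsub>A\<^esub> \<in> carrier A - {z}"
    using d \<open>monoid A\<close> by (simp add: domain_with_zero_def)
  then have "c = \<one>\<^bsub>A\<^esub>"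
    using d a c ac unfolding domain_with_zero_def by blast
  then show ?thesis
    using qjc \<open>j = i\<close> by simp
qed

theorem projective_pointed_module_free:
  fixes M :: "'m set"
  assumes A: "monoid A" and d: "domain_with_zero A z"
    and proj: "pointed_module_projective A z M bp act"
  shows "pointed_module_free A z M bp act"
proof -
  obtain I :: "'m set" and r s where
    r: "pointed_module_hom A (free_pointed_carrier A z I) None (free_pointed_act A z) M bp act r" and
    s: "pointed_module_hom A M bp act (free_pointed_carrier A z I) None (free_pointed_act A z) s" and
    rs: "\<forall>x\<in>M. r (s x) = x"
    using proj unfolding pointed_module_projective_def by blast
  let ?F = "free_pointed_carrier A z"
  have e: "pointed_module_hom A (?F I) None (free_pointed_act A z) (?F I) None (free_pointed_act A z)
      (s \<circ> r)"
    using r s by (rule pointed_module_hom_comp)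
  have e_None: "s (r None) = None"
    using e by (simp add: pointed_module_hom_def)
  have e_generator: "s (r (Some (i, a))) = free_pointed_act A z a (s (r (Some (i, \<one>\<^bsub>A\<^esub>))))"
    if "i \<in> I" "a \<in> carrier A" "a \<noteq> z" for i a
    using free_pointed_hom_generator[OF A d e that] by simp
  define J where "J = {i \<in> I. s (r (Some (i, \<one>\<^bsub>A\<^esub>))) = Some (i, \<one>\<^bsub>A\<^esub>)}"
  have "J \<subseteq> I" by (auto simp: J_def)
  have e_fixes_FJ: "\<forall>p \<in> ?F J. s (r p) = p"
    using A e_None
    by (auto simp: free_pointed_carrier_def J_def e_generator free_pointed_act_generator)
  have s_into_FJ: "s ` M \<subseteq> ?F J"
  proof
    fix y assume "y \<in> s ` M"
    then obtain x where x: "x \<in> M" and y: "y = s x" by blast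
    then have "s x \<in> ?F I"
      using s by (simp add: pointed_module_hom_def set_module_hom_def)
    then consider "s x = None"
      | i a where "s x = Some (i, a)" "i \<in> I" "a \<in> carrier A" "a \<noteq> z"
      by (auto simp: free_pointed_carrier_def)
    then show "y \<in> ?F J"
    proof cases
      case 1
      then show ?thesis using y by (simp add: free_pointed_carrier_def)
    next
      case (2 i a)
      have "Some (i, \<one>\<^bsub>A\<^esub>) \<in> ?F I"
        using A d 2 by (simp add: free_pointed_carrier_def domain_with_zero_def)
      then have "s (r (Some (i, \<one>\<^bsub>A\<^esub>))) \<in> ?F I"
        using e by (simp add: pointed_module_hom_def set_module_hom_def)
      moreover have "free_pointed_act A z a (s (r (Some (i, \<one>\<^bsub>A\<^esub>)))) = Some (i, a)"
        using rs x 2 e_generator by metis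
      ultimately have "s (r (Some (i, \<one>\<^bsub>A\<^esub>))) = Some (i, \<one>\<^bsub>A\<^esub>)"
        by (rule free_pointed_act_eq_generator[OF A d 2(3,4)])
      then show ?thesis
        using 2 y by (simp add: J_def free_pointed_carrier_def)
    qed
  qed
  have "r ` ?F J \<subseteq> M"
    using r free_pointed_carrier_mono[OF \<open>J \<subseteq> I\<close>, of A z]
    unfolding pointed_module_hom_def set_module_hom_def by blast
  then have "bij_betw r (?F J) M"
    using e_fixes_FJ rs s_into_FJ by (intro bij_betw_byWitness[where f' = s])
  then show ?thesis
    unfolding pointed_module_free_def using pointed_module_hom_free_subset[OF r \<open>J \<subseteq> I\<close>] by blast
qed

theorem mainTheorem4:
  fixes A :: "('a, 'b) monoid_scheme"
  assumes "comm_monoid A"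
  shows "(cancellative A \<longrightarrow>
            (\<forall>(M :: 'm set) act. set_module A M act \<and> set_module_projective A M act
               \<longrightarrow> set_module_free A M act))
       \<and> (\<forall>z. is_zero_of A z \<and> domain_with_zero A z \<longrightarrow>
            (\<forall>(M :: 'm set) bp act. pointed_module A z M bp act \<and> pointed_module_projective A z M bp act
               \<longrightarrow> pointed_module_free A z M bp act))"
proof -
  have A: "monoid A"
    using assms by (rule comm_monoid.axioms(1))
  show ?thesis
    by (blast intro: projective_set_module_free[OF A] projective_pointed_module_free[OF A])
qed

end
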